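(* Let $k$ be a field of characteristic zero, $\mathcal{A}$ a split $k$-linear abelian category, and $\mathbb{G}=\pi_1[1]\rtimes_z\pi_0[0]$ a strict skeletal 2-group with $\pi_0$ and $\pi_1$ finite. Let $V_\bullet=(0:V_1\to V_0)$ be an object of $\mathbf{Ch}'_2(\mathcal{A})$ and let $(\rho_1,\rho_0,\beta,c)$ be a representation of $\mathbb{G}$ on $V_\bullet$. Then (i) $\beta=0$, and (ii) the representation $(\rho_1,\rho_0,0,c)$ is equivalent, in the 2-category $\mathbf{Rep}_{\mathbf{Ch}_2(\mathcal{A})}(\mathbb{G})$, to $(\rho_1,\rho_0,0,0)$. In particular, up to equivalence a representation of $\mathbb{G}$ in $\mathbf{Ch}'_2(\mathcal{A})$ is completely determined by a pair of representations $\rho_1,\rho_0$ of $\pi_0$ in $\mathcal{A}$.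
   Context: $\mathbf{Ch}_2(\mathcal{A})$: the strict 2-category whose objects are morphisms $d:V_1\to V_0$ in $\mathcal{A}$; 1-cells $(f_1,f_0)$ are commuting squares; 2-cells $\sigma:(f_1,f_0)\Rightarrow(g_1,g_0)$ are morphisms $\sigma:V_0\to W_1$ with $d_W\sigma=g_0-f_0$, $\sigma d_V=g_1-f_1$; 1-cells compose componentwise, 2-cells compose vertically by addition, horizontal composite of $\sigma:f\Rightarrow g$ and $\sigma':f'\Rightarrow g'$ is $f'_1\sigma+\sigma' g_0$. $\mathbf{Ch}'_2(\mathcal{A})$ is its full sub-2-category on objects with zero differential. $\mathcal{A}$ split means every short exact sequence splits. The strict skeletal 2-group $\mathbb{G}=\pi_1[1]\rtimes_z\pi_0[0]$ is given by a group $\pi_0$, a left $\pi_0$-module $\pi_1$ (action $\rhd$) and a normalized 3-cocycle $z:\pi_0^3\to\pi_1$: its objects are elements of $\pi_0$, morphisms are pairs $(a,g):g\to g$ with $a\in\pi_1$, composition is addition in $\pi_1$, tensor product is $g\otimes g'=gg'$ and $(a,g)\otimes(a',g')=(a+g\rhd a',gg')$, associator $\alpha_{g,g',g''}=(z(g,g',g''),gg'g'')$, trivial unitors. $\mathbf{Rep}_{\mathbf{Ch}_2(\mathcal{A})}(\mathbb{G})$ is the 2-category of pseudofunctors $\mathbb{G}[1]\to\mathbf{Ch}_2(\mathcal{A})$ (where $\mathbb{G}[1]$ is the one-object bicategory with $\mathbb{G}$ as endomorphism 2-group), pseudonatural transformations and modifications; equivalence means equivalence in this 2-category. A representation $(\rho_1,\rho_0,\beta,c)$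 of $\mathbb{G}$ on $V_\bullet=(0:V_1\to V_0)$ is the pseudofunctor sending the unique object to $V_\bullet$, each $g\in\pi_0$ to the 1-cell $(\rho_1(g),\rho_0(g))$, each morphism $(a,g)$ to the 2-cell $\beta(a):V_0\to V_1$, with compositor $f^g\circ f^h\Rightarrow f^{gh}$ given by $c(g,h):V_0\to V_1$ and trivial unit constraint. Here $\rho_i:\pi_0\to\mathrm{Aut}_\mathcal{A}(V_i)$ are group homomorphisms, $\beta:\pi_1\to\mathcal{A}(V_0,V_1)$ is a morphism of left $\pi_0$-modules where $\pi_0$ acts on $\mathcal{A}(V_0,V_1)$ by $g\cdot\sigma=\rho_1(g)\circ\sigma\circ\rho_0(g)^{-1}$, and $c:\pi_0^2\to\mathcal{A}(V_0,V_1)$ is a normalized 2-cochain whose coboundary (for this module structure) equals $\beta\circ z$; these conditions are exactly the pseudofunctor axioms. *)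

theory Defs
  imports "HOL-Algebra.Group"
begin

text \<open>A category with object set, hom-sets, composition (c_cmp g f = g o f),
identities, and k-vector-space structure on each hom-set (zero, addition, scalar
multiplication). Hom-sets of distinct pairs of objects are disjoint, so a single
global addition/scalar multiplication is meaningful.\<close>

record ('o, 'm, 'k) kcat =
  c_obj :: "'o set"
  c_hom :: "'o \<Rightarrow> 'o \<Rightarrow> 'm set"
  c_cmp :: "'m \<Rightarrow> 'm \<Rightarrow> 'm"
  c_id :: "'o \<Rightarrow> 'm"
  c_zero :: "'o \<Rightarrow> 'o \<Rightarrow> 'm"
  c_add :: "'m \<Rightarrow> 'm \<Rightarrow> 'm"
  c_smult :: "'k \<Rightarrow> 'm \<Rightarrow> 'm"

definition klinear_cat :: "('o, 'm, 'k::field) kcat \<Rightarrow> bool" where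
  "klinear_cat C \<longleftrightarrow>
     (\<forall>a b a' b' f. f \<in> c_hom C a b \<and> f \<in> c_hom C a' b' \<longrightarrow> a = a' \<and> b = b') \<and>
     (\<forall>a b. (a \<notin> c_obj C \<or> b \<notin> c_obj C) \<longrightarrow> c_hom C a b = {}) \<and>
     (\<forall>a\<in>c_obj C. c_id C a \<in> c_hom C a a) \<and>
     (\<forall>a b c f g. f \<in> c_hom C a b \<and> g \<in> c_hom C b c \<longrightarrow> c_cmp C g f \<in> c_hom C a c) \<and>
     (\<forall>a b c d f g h. f \<in> c_hom C a b \<and> g \<in> c_hom C b c \<and> h \<in> c_hom C c d \<longrightarrow>
        c_cmp C h (c_cmp C g f) = c_cmp C (c_cmp C h g) f) \<and>
     (\<forall>a b f. f \<in> c_hom C a b \<longrightarrow> c_cmp C (c_id C b) f = f \<and> c_cmp C f (c_id C a) = f) \<and>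
     (\<forall>a\<in>c_obj C. \<forall>b\<in>c_obj C.
        c_zero C a b \<in> c_hom C a b \<and>
        (\<forall>f\<in>c_hom C a b. \<forall>g\<in>c_hom C a b. c_add C f g \<in> c_hom C a b \<and> c_add C f g = c_add C g f) \<and>
        (\<forall>f\<in>c_hom C a b. \<forall>g\<in>c_hom C a b. \<forall>h\<in>c_hom C a b.
            c_add C (c_add C f g) h = c_add C f (c_add C g h)) \<and>
        (\<forall>f\<in>c_hom C a b. c_add C f (c_zero C a b) = f \<and>
                          c_add C f (c_smult C (-1) f) = c_zero C a b \<and>
                          c_smult C 1 f = f) \<and>
        (\<forall>f\<in>c_hom C a b. \<forall>x y. c_smult C x f \<in> c_hom C a b \<and>
            c_smult C (x + y) f = c_add C (c_smult C x f) (c_smult C y f) \<and>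
            c_smult C (x * y) f = c_smult C x (c_smult C y f)) \<and>
        (\<forall>f\<in>c_hom C a b. \<forall>g\<in>c_hom C a b. \<forall>x.
            c_smult C x (c_add C f g) = c_add C (c_smult C x f) (c_smult C x g))) \<and>
     (\<forall>a b c f g g' x. f \<in> c_hom C a b \<and> g \<in> c_hom C b c \<and> g' \<in> c_hom C b c \<longrightarrow>
        c_cmp C (c_add C g g') f = c_add C (c_cmp C g f) (c_cmp C g' f) \<and>
        c_cmp C (c_smult C x g) f = c_smult C x (c_cmp C g f)) \<and>
     (\<forall>a b c f f' g x. f \<in> c_hom C a b \<and> f' \<in> c_hom C a b \<and> g \<in> c_hom C b c \<longrightarrow>
        c_cmp C g (c_add C f f') = c_add C (c_cmp C g f) (c_cmp C g f') \<and>
        c_cmp C g (c_smult C x f) = c_smult C x (c_cmp C g f))"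

definition is_mono :: "('o, 'm, 'k) kcat \<Rightarrow> 'm \<Rightarrow> bool" where
  "is_mono C f \<longleftrightarrow> (\<exists>a b. f \<in> c_hom C a b \<and>
     (\<forall>c g h. g \<in> c_hom C c a \<and> h \<in> c_hom C c a \<and> c_cmp C f g = c_cmp C f h \<longrightarrow> g = h))"

definition is_epi :: "('o, 'm, 'k) kcat \<Rightarrow> 'm \<Rightarrow> bool" where
  "is_epi C f \<longleftrightarrow> (\<exists>a b. f \<in> c_hom C a b \<and>
     (\<forall>c g h. g \<in> c_hom C b c \<and> h \<in> c_hom C b c \<and> c_cmp C g f = c_cmp C h f \<longrightarrow> g = h))"

definition is_kernel :: "('o, 'm, 'k) kcat \<Rightarrow> 'm \<Rightarrow> 'm \<Rightarrow> bool" where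
  "is_kernel C k f \<longleftrightarrow> (\<exists>K a b. k \<in> c_hom C K a \<and> f \<in> c_hom C a b \<and>
     c_cmp C f k = c_zero C K b \<and>
     (\<forall>c g. g \<in> c_hom C c a \<and> c_cmp C f g = c_zero C c b \<longrightarrow>
        (\<exists>!u. u \<in> c_hom C c K \<and> c_cmp C k u = g)))"

definition is_cokernel :: "('o, 'm, 'k) kcat \<Rightarrow> 'm \<Rightarrow> 'm \<Rightarrow> bool" where
  "is_cokernel C q f \<longleftrightarrow> (\<exists>a b Q. f \<in> c_hom C a b \<and> q \<in> c_hom C b Q \<and>
     c_cmp C q f = c_zero C a Q \<and>
     (\<forall>c g. g \<in> c_hom C b c \<and> c_cmp C g f = c_zero C a c \<longrightarrow>
        (\<exists>!u. u \<in> c_hom C Q c \<and> c_cmp C u q = g)))"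

definition is_zero_object :: "('o, 'm, 'k) kcat \<Rightarrow> 'o \<Rightarrow> bool" where
  "is_zero_object C z \<longleftrightarrow> z \<in> c_obj C \<and>
     (\<forall>a\<in>c_obj C. (\<exists>!f. f \<in> c_hom C z a) \<and> (\<exists>!f. f \<in> c_hom C a z))"

definition is_biproduct :: "('o, 'm, 'k) kcat \<Rightarrow> 'o \<Rightarrow> 'o \<Rightarrow> 'o \<Rightarrow> 'm \<Rightarrow> 'm \<Rightarrow> 'm \<Rightarrow> 'm \<Rightarrow> bool" where
  "is_biproduct C a b p i1 i2 p1 p2 \<longleftrightarrow>
     p \<in> c_obj C \<and> i1 \<in> c_hom C a p \<and> i2 \<in> c_hom C b p \<and> p1 \<in> c_hom C p a \<and> p2 \<in> c_hom C p b \<and>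
     c_cmp C p1 i1 = c_id C a \<and> c_cmp C p2 i2 = c_id C b \<and>
     c_cmp C p1 i2 = c_zero C b a \<and> c_cmp C p2 i1 = c_zero C a b \<and>
     c_add C (c_cmp C i1 p1) (c_cmp C i2 p2) = c_id C p"

definition abelian_kcat :: "('o, 'm, 'k::field) kcat \<Rightarrow> bool" where
  "abelian_kcat C \<longleftrightarrow> klinear_cat C \<and>
     (\<exists>z. is_zero_object C z) \<and>
     (\<forall>a\<in>c_obj C. \<forall>b\<in>c_obj C. \<exists>p i1 i2 p1 p2. is_biproduct C a b p i1 i2 p1 p2) \<and>
     (\<forall>a b f. f \<in> c_hom C a b \<longrightarrow> (\<exists>k. is_kernel C k f) \<and> (\<exists>q. is_cokernel C q f)) \<and>
     (\<forall>m. is_mono C m \<longrightarrow> (\<exists>f. is_kernel C m f)) \<and>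
     (\<forall>e. is_epi C e \<longrightarrow> (\<exists>f. is_cokernel C e f))"

definition short_exact :: "('o, 'm, 'k) kcat \<Rightarrow> 'm \<Rightarrow> 'm \<Rightarrow> bool" where
  "short_exact C f g \<longleftrightarrow> is_mono C f \<and> is_epi C g \<and> is_kernel C f g \<and> is_cokernel C g f"

definition split_cat :: "('o, 'm, 'k) kcat \<Rightarrow> bool" where
  "split_cat C \<longleftrightarrow> (\<forall>a b c f g. f \<in> c_hom C a b \<and> g \<in> c_hom C b c \<and> short_exact C f g \<longrightarrow>
     (\<exists>s\<in>c_hom C c b. c_cmp C g s = c_id C c))"

text \<open>pi_0 = G (a group), pi_1 = M (an abelian group, written multiplicatively in HOL-Algebra)
with left action act, and z a normalized 3-cocycle.\<close>
definition skeletal_2group :: "('g, 'x) monoid_scheme \<Rightarrow> ('a, 'y) monoid_scheme \<Rightarrow>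
    ('g \<Rightarrow> 'a \<Rightarrow> 'a) \<Rightarrow> ('g \<Rightarrow> 'g \<Rightarrow> 'g \<Rightarrow> 'a) \<Rightarrow> bool" where
  "skeletal_2group G M act z \<longleftrightarrow> group G \<and> comm_group M \<and>
     (\<forall>g\<in>carrier G. \<forall>a\<in>carrier M. act g a \<in> carrier M) \<and>
     (\<forall>a\<in>carrier M. act \<one>\<^bsub>G\<^esub> a = a) \<and>
     (\<forall>g\<in>carrier G. \<forall>h\<in>carrier G. \<forall>a\<in>carrier M. act (g \<otimes>\<^bsub>G\<^esub> h) a = act g (act h a)) \<and>
     (\<forall>g\<in>carrier G. \<forall>a\<in>carrier M. \<forall>b\<in>carrier M.
        act g (a \<otimes>\<^bsub>M\<^esub> b) = act g a \<otimes>\<^bsub>M\<^esub> act g b) \<and>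
     (\<forall>g\<in>carrier G. \<forall>h\<in>carrier G. \<forall>k\<in>carrier G. z g h k \<in> carrier M) \<and>
     (\<forall>g\<in>carrier G. \<forall>h\<in>carrier G.
        z \<one>\<^bsub>G\<^esub> g h = \<one>\<^bsub>M\<^esub> \<and> z g \<one>\<^bsub>G\<^esub> h = \<one>\<^bsub>M\<^esub> \<and> z g h \<one>\<^bsub>G\<^esub> = \<one>\<^bsub>M\<^esub>) \<and>
     (\<forall>g\<in>carrier G. \<forall>h\<in>carrier G. \<forall>k\<in>carrier G. \<forall>l\<in>carrier G.
        act g (z h k l) \<otimes>\<^bsub>M\<^esub> z g (h \<otimes>\<^bsub>G\<^esub> k) l \<otimes>\<^bsub>M\<^esub> z g h k
        = z (g \<otimes>\<^bsub>G\<^esub> h) k l \<otimes>\<^bsub>M\<^esub> z g h (k \<otimes>\<^bsub>G\<^esub> l))"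

text \<open>A representation (rho1, rho0, beta, c) on V = (0 : V1 -> V0): the pseudofunctor
G[1] -> Ch_2(A) sending g to the 1-cell (rho1 g, rho0 g), (a,g) to the 2-cell beta a,
with compositor c g h : F(g) o F(h) => F(gh) and trivial unit constraint.
is_rep spells out the pseudofunctor axioms, computed with the composition laws of
Ch_2(A) (vertical composition = addition, horizontal composite of s : f => g and
s' : f' => g' is f'_1 s + s' g_0), specialized to zero differentials.\<close>

type_synonym ('g, 'a, 'm) repdata = "('g \<Rightarrow> 'm) \<times> ('g \<Rightarrow> 'm) \<times> ('a \<Rightarrow> 'm) \<times> ('g \<Rightarrow> 'g \<Rightarrow> 'm)"

definition is_rep :: "('o, 'm, 'k) kcat \<Rightarrow> ('g, 'x) monoid_scheme \<Rightarrow> ('a, 'y) monoid_scheme \<Rightarrow>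
    ('g \<Rightarrow> 'a \<Rightarrow> 'a) \<Rightarrow> ('g \<Rightarrow> 'g \<Rightarrow> 'g \<Rightarrow> 'a) \<Rightarrow> 'o \<Rightarrow> 'o \<Rightarrow> ('g, 'a, 'm) repdata \<Rightarrow> bool" where
  "is_rep C G M act z V1 V0 F \<longleftrightarrow> (case F of (\<rho>1, \<rho>0, \<beta>, c) \<Rightarrow>
     V1 \<in> c_obj C \<and> V0 \<in> c_obj C \<and>
     \<comment> \<open>1-cells and 2-cells land in the right hom-sets\<close>
     (\<forall>g\<in>carrier G. \<rho>1 g \<in> c_hom C V1 V1 \<and> \<rho>0 g \<in> c_hom C V0 V0) \<and>
     (\<forall>a\<in>carrier M. \<beta> a \<in> c_hom C V0 V1) \<and>
     (\<forall>g\<in>carrier G. \<forall>h\<in>carrier G. c g h \<in> c_hom C V0 V1) \<and>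
     \<comment> \<open>c g h is a 2-cell F(g) o F(h) => F(gh); with d = 0 this forces equality of 1-cells\<close>
     (\<forall>g\<in>carrier G. \<forall>h\<in>carrier G.
        \<rho>1 (g \<otimes>\<^bsub>G\<^esub> h) = c_cmp C (\<rho>1 g) (\<rho>1 h) \<and> \<rho>0 (g \<otimes>\<^bsub>G\<^esub> h) = c_cmp C (\<rho>0 g) (\<rho>0 h)) \<and>
     \<comment> \<open>trivial unit constraint and unit axioms\<close>
     \<rho>1 \<one>\<^bsub>G\<^esub> = c_id C V1 \<and> \<rho>0 \<one>\<^bsub>G\<^esub> = c_id C V0 \<and>
     (\<forall>g\<in>carrier G. c \<one>\<^bsub>G\<^esub> g = c_zero C V0 V1 \<and> c g \<one>\<^bsub>G\<^esub> = c_zero C V0 V1) \<and>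
     \<comment> \<open>functoriality on 2-cells (vertical composition)\<close>
     (\<forall>a\<in>carrier M. \<forall>b\<in>carrier M. \<beta> (a \<otimes>\<^bsub>M\<^esub> b) = c_add C (\<beta> a) (\<beta> b)) \<and>
     \<beta> \<one>\<^bsub>M\<^esub> = c_zero C V0 V1 \<and>
     \<comment> \<open>naturality of the compositor\<close>
     (\<forall>g\<in>carrier G. \<forall>h\<in>carrier G. \<forall>a\<in>carrier M. \<forall>b\<in>carrier M.
        c_add C (c_add C (c_cmp C (\<rho>1 g) (\<beta> b)) (c_cmp C (\<beta> a) (\<rho>0 h))) (c g h)
        = c_add C (c g h) (\<beta> (a \<otimes>\<^bsub>M\<^esub> act g b))) \<and>
     \<comment> \<open>associativity (hexagon) axiom, associator (z(g,h,k), ghk)\<close>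
     (\<forall>g\<in>carrier G. \<forall>h\<in>carrier G. \<forall>k\<in>carrier G.
        c_add C (c_add C (c_cmp C (c g h) (\<rho>0 k)) (c (g \<otimes>\<^bsub>G\<^esub> h) k)) (\<beta> (z g h k))
        = c_add C (c_cmp C (\<rho>1 g) (c h k)) (c g (h \<otimes>\<^bsub>G\<^esub> k))))"

section \<open>The 2-category Rep: pseudonatural transformations and modifications\<close>

type_synonym ('g, 'm) transdata = "'m \<times> 'm \<times> ('g \<Rightarrow> 'm)"

text \<open>A pseudonatural transformation F => F' (F on V, F' on W): a 1-cell (t1,t0) : V -> W
and for each g a 2-cell theta g : F'(g) o t => t o F(g).\<close>
definition is_trans :: "('o, 'm, 'k) kcat \<Rightarrow> ('g, 'x) monoid_scheme \<Rightarrow> ('a, 'y) monoid_scheme \<Rightarrow>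
    'o \<Rightarrow> 'o \<Rightarrow> ('g, 'a, 'm) repdata \<Rightarrow> 'o \<Rightarrow> 'o \<Rightarrow> ('g, 'a, 'm) repdata \<Rightarrow> ('g, 'm) transdata \<Rightarrow> bool" where
  "is_trans C G M V1 V0 F W1 W0 F' T \<longleftrightarrow>
    (case F of (\<rho>1, \<rho>0, \<beta>, c) \<Rightarrow> case F' of (\<sigma>1, \<sigma>0, \<beta>', c') \<Rightarrow> case T of (t1, t0, \<theta>) \<Rightarrow>
     t1 \<in> c_hom C V1 W1 \<and> t0 \<in> c_hom C V0 W0 \<and>
     (\<forall>g\<in>carrier G. \<theta> g \<in> c_hom C V0 W1 \<and>
        c_cmp C t1 (\<rho>1 g) = c_cmp C (\<sigma>1 g) t1 \<and> c_cmp C t0 (\<rho>0 g) = c_cmp C (\<sigma>0 g) t0) \<and>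
     (\<forall>g\<in>carrier G. \<forall>a\<in>carrier M.
        c_add C (c_cmp C (\<beta>' a) t0) (\<theta> g) = c_add C (\<theta> g) (c_cmp C t1 (\<beta> a))) \<and>
     (\<forall>g\<in>carrier G. \<forall>h\<in>carrier G.
        c_add C (c_cmp C (c' g h) t0) (\<theta> (g \<otimes>\<^bsub>G\<^esub> h))
        = c_add C (c_add C (c_cmp C (\<sigma>1 g) (\<theta> h)) (c_cmp C (\<theta> g) (\<rho>0 h))) (c_cmp C t1 (c g h))) \<and>
     \<theta> \<one>\<^bsub>G\<^esub> = c_zero C V0 W1)"

text \<open>Composite of T : F => F' and T' : F' => F'' (T first).\<close>
definition trans_comp :: "('o, 'm, 'k) kcat \<Rightarrow> ('g, 'm) transdata \<Rightarrow> ('g, 'm) transdata \<Rightarrow> ('g, 'm) transdata" where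
  "trans_comp C T' T = (case T' of (t1', t0', \<theta>') \<Rightarrow> case T of (t1, t0, \<theta>) \<Rightarrow>
     (c_cmp C t1' t1, c_cmp C t0' t0, \<lambda>g. c_add C (c_cmp C (\<theta>' g) t0) (c_cmp C t1' (\<theta> g))))"

definition trans_id :: "('o, 'm, 'k) kcat \<Rightarrow> 'o \<Rightarrow> 'o \<Rightarrow> ('g, 'm) transdata" where
  "trans_id C V1 V0 = (c_id C V1, c_id C V0, \<lambda>g. c_zero C V0 V1)"

text \<open>A modification Gamma : T => S between transformations F => F' (2-cell t => s in Ch_2).\<close>
definition is_modif :: "('o, 'm, 'k) kcat \<Rightarrow> ('g, 'x) monoid_scheme \<Rightarrow>
    'o \<Rightarrow> 'o \<Rightarrow> ('g, 'a, 'm) repdata \<Rightarrow> 'o \<Rightarrow> 'o \<Rightarrow> ('g, 'a, 'm) repdata \<Rightarrow>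
    ('g, 'm) transdata \<Rightarrow> ('g, 'm) transdata \<Rightarrow> 'm \<Rightarrow> bool" where
  "is_modif C G V1 V0 F W1 W0 F' T S \<Gamma> \<longleftrightarrow>
    (case F of (\<rho>1, \<rho>0, \<beta>, c) \<Rightarrow> case F' of (\<sigma>1, \<sigma>0, \<beta>', c') \<Rightarrow>
     case T of (t1, t0, \<theta>) \<Rightarrow> case S of (s1, s0, \<psi>) \<Rightarrow>
     \<Gamma> \<in> c_hom C V0 W1 \<and> s1 = t1 \<and> s0 = t0 \<and>
     (\<forall>g\<in>carrier G. c_add C (c_cmp C (\<sigma>1 g) \<Gamma>) (\<psi> g) = c_add C (\<theta> g) (c_cmp C \<Gamma> (\<rho>0 g))))"

definition is_inv_modif :: "('o, 'm, 'k) kcat \<Rightarrow> ('g, 'x) monoid_scheme \<Rightarrow>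
    'o \<Rightarrow> 'o \<Rightarrow> ('g, 'a, 'm) repdata \<Rightarrow> 'o \<Rightarrow> 'o \<Rightarrow> ('g, 'a, 'm) repdata \<Rightarrow>
    ('g, 'm) transdata \<Rightarrow> ('g, 'm) transdata \<Rightarrow> 'm \<Rightarrow> bool" where
  "is_inv_modif C G V1 V0 F W1 W0 F' T S \<Gamma> \<longleftrightarrow>
     is_modif C G V1 V0 F W1 W0 F' T S \<Gamma> \<and>
     (\<exists>\<Gamma>'. is_modif C G V1 V0 F W1 W0 F' S T \<Gamma>' \<and>
        c_add C \<Gamma> \<Gamma>' = c_zero C V0 W1 \<and> c_add C \<Gamma>' \<Gamma> = c_zero C V0 W1)"

definition rep_equiv :: "('o, 'm, 'k) kcat \<Rightarrow> ('g, 'x) monoid_scheme \<Rightarrow> ('a, 'y) monoid_scheme \<Rightarrow>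
    'o \<Rightarrow> 'o \<Rightarrow> ('g, 'a, 'm) repdata \<Rightarrow> 'o \<Rightarrow> 'o \<Rightarrow> ('g, 'a, 'm) repdata \<Rightarrow> bool" where
  "rep_equiv C G M V1 V0 F W1 W0 F' \<longleftrightarrow>
     (\<exists>T T' \<Gamma> \<Gamma>'.
        is_trans C G M V1 V0 F W1 W0 F' T \<and> is_trans C G M W1 W0 F' V1 V0 F T' \<and>
        is_inv_modif C G V1 V0 F V1 V0 F (trans_comp C T' T) (trans_id C V1 V0) \<Gamma> \<and>
        is_inv_modif C G W1 W0 F' W1 W0 F' (trans_comp C T T') (trans_id C W1 W0) \<Gamma>')"

end

theory Submission
  imports Defs "HOL-Algebra.Multiplicative_Group"
begin

(* For (i): beta is a homomorphism from the finite group pi_1 into the k-vector space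
   Hom(V0, V1), so |pi_1| beta(a) = beta(a^|pi_1|) = beta(1) = 0, and |pi_1| is invertible in k.
   For (ii): once beta = 0, the hexagon axiom says that c is a normalized 2-cocycle of pi_0 with
   values in Hom(V0, V1), on which g acts by s |-> rho_1(g) s rho_0(g)^-1. Since |pi_0| is
   invertible in k, averaging exhibits c as a coboundary: S(g) = 1/|pi_0| sum_k c(g,k) rho_0(k)^-1
   satisfies c(g,h) + S(gh) = rho_1(g) S(h) + S(g) rho_0(h). The pseudonatural transformations
   with identity 1-cells and 2-cell components -S and S are then mutually inverse up to zero
   modifications. *)

lemma comm_group_hom_finprod:
  assumes "comm_group G" "comm_group H" "\<phi> \<in> hom G H" "f \<in> A \<rightarrow> carrier G"
  shows "\<phi> (finprod G f A) = finprod H (\<phi> \<circ> f) A"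
proof -
  interpret G: comm_group G by (fact assms(1))
  interpret H: comm_group H by (fact assms(2))
  interpret group_hom G H \<phi>
    using assms by (simp add: group_hom_def group_hom_axioms_def)
  show ?thesis
    using assms(4)
    by (induction A rule: infinite_finite_induct)
      (auto simp: G.finprod_insert H.finprod_insert Pi_iff G.finprod_closed hom_closed)
qed

lemma finprod_translate_left:
  assumes "group G" "comm_monoid H" "h \<in> carrier G" "f \<in> carrier G \<rightarrow> carrier H"
  shows "finprod H (\<lambda>k. f (h \<otimes>\<^bsub>G\<^esub> k)) (carrier G) = finprod H f (carrier G)"
  using comm_monoid.finprod_reindex[OF assms(2) _ group.inj_on_cmult[OF assms(1,3)]]
    group.surj_const_mult[OF assms(1,3)] assms(4)
  by simp

locale klinear_category =
  fixes C :: "('o, 'm, 'k::field) kcat"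
  assumes klinear: "klinear_cat C"
begin

abbreviation "Hom \<equiv> c_hom C"
abbreviation "Cmp \<equiv> c_cmp C"
abbreviation "Add \<equiv> c_add C"
abbreviation "Zero \<equiv> c_zero C"
abbreviation "Smult \<equiv> c_smult C"

lemma hom_objects: "f \<in> Hom a b \<Longrightarrow> a \<in> c_obj C \<and> b \<in> c_obj C"
  using klinear unfolding klinear_cat_def by (elim conjE) blast

lemma id_in_hom: "a \<in> c_obj C \<Longrightarrow> c_id C a \<in> Hom a a"
  using klinear unfolding klinear_cat_def by metis

lemma comp_in_hom: "f \<in> Hom a b \<Longrightarrow> g \<in> Hom b c \<Longrightarrow> Cmp g f \<in> Hom a c"
  using klinear unfolding klinear_cat_def by metis

lemma comp_assoc:
  "f \<in> Hom a b \<Longrightarrow> g \<in> Hom b c \<Longrightarrow> h \<in> Hom c d \<Longrightarrow> Cmp h (Cmp g f) = Cmp (Cmp h g) f"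
  using klinear unfolding klinear_cat_def by metis

lemma comp_id_left: "f \<in> Hom a b \<Longrightarrow> Cmp (c_id C b) f = f"
  using klinear unfolding klinear_cat_def by metis

lemma comp_id_right: "f \<in> Hom a b \<Longrightarrow> Cmp f (c_id C a) = f"
  using klinear unfolding klinear_cat_def by metis

lemma zero_in_hom: "a \<in> c_obj C \<Longrightarrow> b \<in> c_obj C \<Longrightarrow> Zero a b \<in> Hom a b"
  using klinear unfolding klinear_cat_def by metis

lemma add_in_hom: "f \<in> Hom a b \<Longrightarrow> g \<in> Hom a b \<Longrightarrow> Add f g \<in> Hom a b"
  using klinear hom_objects unfolding klinear_cat_def by metis

lemma add_commute: "f \<in> Hom a b \<Longrightarrow> g \<in> Hom a b \<Longrightarrow> Add f g = Add g f"
  using klinear hom_objects unfolding klinear_cat_def by metis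

lemma add_assoc:
  "f \<in> Hom a b \<Longrightarrow> g \<in> Hom a b \<Longrightarrow> h \<in> Hom a b \<Longrightarrow> Add (Add f g) h = Add f (Add g h)"
  using klinear hom_objects unfolding klinear_cat_def by metis

lemma add_zero_right: "f \<in> Hom a b \<Longrightarrow> Add f (Zero a b) = f"
  using klinear hom_objects unfolding klinear_cat_def by metis

lemma add_neg_right: "f \<in> Hom a b \<Longrightarrow> Add f (Smult (-1) f) = Zero a b"
  using klinear hom_objects unfolding klinear_cat_def by metis

lemma smult_in_hom: "f \<in> Hom a b \<Longrightarrow> Smult x f \<in> Hom a b"
  using klinear hom_objects unfolding klinear_cat_def by metis

lemma smult_one: "f \<in> Hom a b \<Longrightarrow> Smult 1 f = f"
  using klinear hom_objects unfolding klinear_cat_def by metis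

lemma smult_add_scalar: "f \<in> Hom a b \<Longrightarrow> Smult (x + y) f = Add (Smult x f) (Smult y f)"
  using klinear hom_objects unfolding klinear_cat_def by metis

lemma smult_smult: "f \<in> Hom a b \<Longrightarrow> Smult x (Smult y f) = Smult (x * y) f"
  using klinear hom_objects unfolding klinear_cat_def by metis

lemma smult_add:
  "f \<in> Hom a b \<Longrightarrow> g \<in> Hom a b \<Longrightarrow> Smult x (Add f g) = Add (Smult x f) (Smult x g)"
  using klinear hom_objects unfolding klinear_cat_def by metis

lemma comp_add_left:
  "f \<in> Hom a b \<Longrightarrow> g \<in> Hom b c \<Longrightarrow> g' \<in> Hom b c \<Longrightarrow>
   Cmp (Add g g') f = Add (Cmp g f) (Cmp g' f)"
  using klinear unfolding klinear_cat_def by metis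

lemma comp_add_right:
  "f \<in> Hom a b \<Longrightarrow> f' \<in> Hom a b \<Longrightarrow> g \<in> Hom b c \<Longrightarrow>
   Cmp g (Add f f') = Add (Cmp g f) (Cmp g f')"
  using klinear unfolding klinear_cat_def by metis

lemma comp_smult_left: "f \<in> Hom a b \<Longrightarrow> g \<in> Hom b c \<Longrightarrow> Cmp (Smult x g) f = Smult x (Cmp g f)"
  using klinear unfolding klinear_cat_def by metis

lemma comp_smult_right: "f \<in> Hom a b \<Longrightarrow> g \<in> Hom b c \<Longrightarrow> Cmp g (Smult x f) = Smult x (Cmp g f)"
  using klinear unfolding klinear_cat_def by metis

(* Each hom-set as an abelian group, so that HOL-Algebra's finprod provides finite sums of
   morphisms. *)
definition hom_group :: "'o \<Rightarrow> 'o \<Rightarrow> 'm monoid" where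
  "hom_group a b = \<lparr>carrier = Hom a b, mult = Add, one = Zero a b\<rparr>"

lemma hom_group_simps [simp]:
  "carrier (hom_group a b) = Hom a b" "mult (hom_group a b) = Add" "one (hom_group a b) = Zero a b"
  by (simp_all add: hom_group_def)

lemma add_zero_left: "f \<in> Hom a b \<Longrightarrow> Add (Zero a b) f = f"
  using add_commute add_zero_right hom_objects zero_in_hom by metis

lemma comm_group_hom_group: "a \<in> c_obj C \<Longrightarrow> b \<in> c_obj C \<Longrightarrow> comm_group (hom_group a b)"
proof (rule comm_groupI)
  show "\<exists>y\<in>carrier (hom_group a b). y \<otimes>\<^bsub>hom_group a b\<^esub> f = \<one>\<^bsub>hom_group a b\<^esub>"
    if "f \<in> carrier (hom_group a b)" for f
    using that add_neg_right add_commute smult_in_hom by (metis hom_group_simps)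
qed (auto simp: add_in_hom zero_in_hom add_assoc add_commute add_zero_left)

lemma smult_zero_scalar: "f \<in> Hom a b \<Longrightarrow> Smult 0 f = Zero a b"
proof -
  assume f: "f \<in> Hom a b"
  interpret comm_group "hom_group a b" using f hom_objects comm_group_hom_group by blast
  have "Add (Smult 0 f) (Smult 0 f) = Smult 0 f"
    using smult_add_scalar[OF f, of 0 0] by simp
  then show ?thesis using smult_in_hom[OF f] l_cancel_one[of "Smult 0 f" "Smult 0 f"] by simp
qed

lemma hom_group_nat_pow: "f \<in> Hom a b \<Longrightarrow> f [^]\<^bsub>hom_group a b\<^esub> n = Smult (of_nat n) f"
proof (induction n)
  case 0
  then show ?case by (simp add: smult_zero_scalar)
next
  case (Suc n)
  then show ?case
    using add_commute[OF smult_in_hom[OF Suc.prems]] by (simp add: smult_one smult_add_scalar)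
qed

lemma smult_hom: "Smult x \<in> hom (hom_group a b) (hom_group a b)"
  by (rule homI) (simp_all add: smult_in_hom smult_add)

lemma comp_left_hom: "g \<in> Hom b c \<Longrightarrow> Cmp g \<in> hom (hom_group a b) (hom_group a c)"
  by (rule homI) (simp_all add: comp_in_hom comp_add_right)

lemma comp_right_hom: "f \<in> Hom a b \<Longrightarrow> (\<lambda>g. Cmp g f) \<in> hom (hom_group b c) (hom_group a c)"
  by (rule homI) (simp_all add: comp_in_hom comp_add_left)

lemma hom_group_hom_zero:
  assumes "a \<in> c_obj C" "b \<in> c_obj C" "a' \<in> c_obj C" "b' \<in> c_obj C"
    and "\<phi> \<in> hom (hom_group a b) (hom_group a' b')"
  shows "\<phi> (Zero a b) = Zero a' b'"
  using group_hom.hom_one[of "hom_group a b" "hom_group a' b'" \<phi>] assms comm_group_hom_group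
  by (simp add: group_hom_def group_hom_axioms_def comm_group.axioms(2))

lemma smult_zero: "a \<in> c_obj C \<Longrightarrow> b \<in> c_obj C \<Longrightarrow> Smult x (Zero a b) = Zero a b"
  using hom_group_hom_zero smult_hom by blast

lemma comp_zero_right: "g \<in> Hom b c \<Longrightarrow> a \<in> c_obj C \<Longrightarrow> Cmp g (Zero a b) = Zero a c"
  using hom_group_hom_zero comp_left_hom hom_objects by blast

lemma comp_zero_left: "f \<in> Hom a b \<Longrightarrow> c \<in> c_obj C \<Longrightarrow> Cmp (Zero b c) f = Zero a c"
  using hom_group_hom_zero[OF _ _ _ _ comp_right_hom] hom_objects by blast

lemma comp_finprod_left:
  assumes "a \<in> c_obj C" "g \<in> Hom b c" "f \<in> A \<rightarrow> Hom a b"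
  shows "Cmp g (finprod (hom_group a b) f A) = finprod (hom_group a c) (\<lambda>k. Cmp g (f k)) A"
  using comm_group_hom_finprod[OF comm_group_hom_group comm_group_hom_group comp_left_hom[OF assms(2)]]
    assms hom_objects by (simp add: comp_def)

lemma comp_finprod_right:
  assumes "c \<in> c_obj C" "f \<in> Hom a b" "g \<in> A \<rightarrow> Hom b c"
  shows "Cmp (finprod (hom_group b c) g A) f = finprod (hom_group a c) (\<lambda>k. Cmp (g k) f) A"
  using comm_group_hom_finprod[OF comm_group_hom_group comm_group_hom_group comp_right_hom[OF assms(2)]]
    assms hom_objects by (simp add: comp_def)

lemma hom_to_hom_group_eq_zero:
  assumes M: "group M" and order: "of_nat (order M) \<noteq> (0::'k)"
    and ab: "a \<in> c_obj C" "b \<in> c_obj C"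
    and \<beta>: "\<beta> \<in> hom M (hom_group a b)" and x: "x \<in> carrier M"
  shows "\<beta> x = Zero a b"
proof -
  interpret group_hom M "hom_group a b" \<beta>
    using M ab \<beta> comm_group_hom_group
    by (simp add: group_hom_def group_hom_axioms_def comm_group.axioms(2))
  have \<beta>x: "\<beta> x \<in> Hom a b" using hom_closed[OF x] by simp
  have "Smult (of_nat (order M)) (\<beta> x) = \<beta> (x [^]\<^bsub>M\<^esub> order M)"
    using hom_nat_pow[OF x] hom_group_nat_pow[OF \<beta>x] by simp
  also have "\<dots> = Zero a b"
    using G.pow_order_eq_1[OF x] by simp
  finally have "Smult (1 / of_nat (order M)) (Smult (of_nat (order M)) (\<beta> x))
              = Smult (1 / of_nat (order M)) (Zero a b)"
    by simp
  then show ?thesis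
    using order ab by (simp add: smult_smult[OF \<beta>x] smult_one[OF \<beta>x] smult_zero)
qed

lemma eq_add_if_neg_add_eq:
  assumes "x \<in> Hom a b" "y \<in> Hom a b" "Add (Smult (-1) x) y = w"
  shows "y = Add w x"
proof -
  have neg_x: "Smult (-1) x \<in> Hom a b" using assms(1) smult_in_hom by blast
  have "Add w x = Add (Smult (-1) x) (Add x y)"
    using assms add_assoc[OF neg_x assms(2,1)] add_commute[OF assms(1,2)] by simp
  also have "\<dots> = y"
    using add_assoc[OF neg_x assms(1,2), symmetric] add_neg_right[OF assms(1)]
      add_commute[OF assms(1) neg_x] add_zero_left[OF assms(2)] by simp
  finally show ?thesis by simp
qed

lemma is_trans_with_identity_components:
  assumes "V1 \<in> c_obj C" "V0 \<in> c_obj C"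
    and \<rho>1: "\<And>g. g \<in> carrier G \<Longrightarrow> \<rho>1 g \<in> Hom V1 V1"
    and \<rho>0: "\<And>g. g \<in> carrier G \<Longrightarrow> \<rho>0 g \<in> Hom V0 V0"
    and c: "\<And>g h. g \<in> carrier G \<Longrightarrow> h \<in> carrier G \<Longrightarrow> c g h \<in> Hom V0 V1"
    and c': "\<And>g h. g \<in> carrier G \<Longrightarrow> h \<in> carrier G \<Longrightarrow> c' g h \<in> Hom V0 V1"
    and \<theta>: "\<And>g. g \<in> carrier G \<Longrightarrow> \<theta> g \<in> Hom V0 V1"
    and \<theta>_one: "\<theta> \<one>\<^bsub>G\<^esub> = Zero V0 V1"
    and "\<And>g h. g \<in> carrier G \<Longrightarrow> h \<in> carrier G \<Longrightarrow>
      Add (c' g h) (\<theta> (g \<otimes>\<^bsub>G\<^esub> h)) = Add (Add (Cmp (\<rho>1 g) (\<theta> h)) (Cmp (\<theta> g) (\<rho>0 h))) (c g h)"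
  shows "is_trans C G M V1 V0 (\<rho>1, \<rho>0, \<lambda>a. Zero V0 V1, c) V1 V0 (\<rho>1, \<rho>0, \<lambda>a. Zero V0 V1, c')
           (c_id C V1, c_id C V0, \<theta>)"
proof -
  have Z: "Zero V0 V1 \<in> Hom V0 V1" using assms(1,2) zero_in_hom by blast
  show ?thesis
    unfolding is_trans_def prod.case
    using assms id_in_hom comp_id_left[OF \<rho>1] comp_id_right[OF \<rho>1] comp_id_left[OF \<rho>0]
      comp_id_right[OF \<rho>0] comp_id_left[OF c] comp_id_right[OF c'] comp_id_left[OF Z]
      comp_id_right[OF Z] add_zero_left[OF \<theta>] add_zero_right[OF \<theta>]
    by auto
qed

lemma is_inv_modif_zero:
  assumes "V1 \<in> c_obj C" "V0 \<in> c_obj C"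
    and \<rho>1: "\<And>g. g \<in> carrier G \<Longrightarrow> \<rho>1 g \<in> Hom V1 V1"
    and \<rho>0: "\<And>g. g \<in> carrier G \<Longrightarrow> \<rho>0 g \<in> Hom V0 V0"
    and \<theta>: "\<And>g. g \<in> carrier G \<Longrightarrow> \<theta> g \<in> Hom V0 V1"
    and \<theta>': "\<And>g. g \<in> carrier G \<Longrightarrow> \<theta>' g \<in> Hom V0 V1"
    and "\<And>g. g \<in> carrier G \<Longrightarrow> Add (\<theta>' g) (\<theta> g) = Zero V0 V1"
  shows "is_inv_modif C G V1 V0 (\<rho>1, \<rho>0, \<beta>, c) V1 V0 (\<rho>1, \<rho>0, \<beta>, c)
           (trans_comp C (c_id C V1, c_id C V0, \<theta>') (c_id C V1, c_id C V0, \<theta>)) (trans_id C V1 V0)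
           (Zero V0 V1)"
proof -
  have Z: "Zero V0 V1 \<in> Hom V0 V1" using assms(1,2) zero_in_hom by blast
  show ?thesis
    unfolding is_inv_modif_def is_modif_def trans_comp_def trans_id_def prod.case
    using assms Z comp_id_left[OF id_in_hom] comp_id_left[OF \<theta>] comp_id_right[OF \<theta>']
      comp_zero_right[OF \<rho>1] comp_zero_left[OF \<rho>0] add_zero_right[OF Z]
    by (intro conjI ballI exI[of _ "Zero V0 V1"]) auto
qed

lemma coboundary_smult_neg:
  assumes \<rho>1: "\<rho>1 \<in> Hom V1 V1" and \<rho>0: "\<rho>0 \<in> Hom V0 V0" and c: "c \<in> Hom V0 V1"
    and s: "s \<in> Hom V0 V1" and t: "t \<in> Hom V0 V1" and st: "st \<in> Hom V0 V1"
    and coboundary: "Add c st = Add (Cmp \<rho>1 t) (Cmp s \<rho>0)"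
  shows "Smult (-1) st = Add (Add (Cmp \<rho>1 (Smult (-1) t)) (Cmp (Smult (-1) s) \<rho>0)) c"
proof (rule eq_add_if_neg_add_eq[OF c smult_in_hom[OF st]])
  have "Add (Smult (-1) c) (Smult (-1) st) = Smult (-1) (Add c st)"
    using smult_add[OF c st] by simp
  also have "\<dots> = Smult (-1) (Add (Cmp \<rho>1 t) (Cmp s \<rho>0))"
    using coboundary by simp
  also have "\<dots> = Add (Cmp \<rho>1 (Smult (-1) t)) (Cmp (Smult (-1) s) \<rho>0)"
    using smult_add[OF comp_in_hom[OF t \<rho>1] comp_in_hom[OF \<rho>0 s]]
      comp_smult_right[OF t \<rho>1] comp_smult_left[OF \<rho>0 s] by simp
  finally show "Add (Smult (-1) c) (Smult (-1) st) = Add (Cmp \<rho>1 (Smult (-1) t)) (Cmp (Smult (-1) s) \<rho>0)" .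
qed

lemma rep_equiv_if_compositor_coboundary:
  assumes "group G" and V: "V1 \<in> c_obj C" "V0 \<in> c_obj C"
    and \<rho>1: "\<And>g. g \<in> carrier G \<Longrightarrow> \<rho>1 g \<in> Hom V1 V1"
    and \<rho>0: "\<And>g. g \<in> carrier G \<Longrightarrow> \<rho>0 g \<in> Hom V0 V0"
    and c: "\<And>g h. g \<in> carrier G \<Longrightarrow> h \<in> carrier G \<Longrightarrow> c g h \<in> Hom V0 V1"
    and S: "\<And>g. g \<in> carrier G \<Longrightarrow> S g \<in> Hom V0 V1"
    and S_one: "S \<one>\<^bsub>G\<^esub> = Zero V0 V1"
    and coboundary: "\<And>g h. g \<in> carrier G \<Longrightarrow> h \<in> carrier G \<Longrightarrow>
      Add (c g h) (S (g \<otimes>\<^bsub>G\<^esub> h)) = Add (Cmp (\<rho>1 g) (S h)) (Cmp (S g) (\<rho>0 h))"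
  shows "rep_equiv C G M V1 V0 (\<rho>1, \<rho>0, \<lambda>a. Zero V0 V1, c)
                          V1 V0 (\<rho>1, \<rho>0, \<lambda>a. Zero V0 V1, \<lambda>g h. Zero V0 V1)"
proof -
  interpret G: group G by (fact assms(1))
  define \<theta> where "\<theta> g = Smult (-1) (S g)" for g
  have \<theta>: "\<theta> g \<in> Hom V0 V1" if "g \<in> carrier G" for g
    unfolding \<theta>_def using S[OF that] smult_in_hom by blast
  have \<theta>_one: "\<theta> \<one>\<^bsub>G\<^esub> = Zero V0 V1"
    unfolding \<theta>_def S_one using V smult_zero by blast
  have Z: "Zero V0 V1 \<in> Hom V0 V1" using V zero_in_hom by blast
  have forward: "Add (Zero V0 V1) (\<theta> (g \<otimes>\<^bsub>G\<^esub> h)) = Add (Add (Cmp (\<rho>1 g) (\<theta> h)) (Cmp (\<theta> g) (\<rho>0 h))) (c g h)"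
    if g: "g \<in> carrier G" and h: "h \<in> carrier G" for g h
  proof -
    have "\<theta> (g \<otimes>\<^bsub>G\<^esub> h) = Add (Add (Cmp (\<rho>1 g) (\<theta> h)) (Cmp (\<theta> g) (\<rho>0 h))) (c g h)"
      unfolding \<theta>_def
      by (rule coboundary_smult_neg[OF \<rho>1[OF g] \<rho>0[OF h] c[OF g h] S[OF g] S[OF h]
            S[OF G.m_closed[OF g h]] coboundary[OF g h]])
    then show ?thesis using add_zero_left[OF \<theta>[OF G.m_closed[OF g h]]] by simp
  qed
  have backward: "Add (c g h) (S (g \<otimes>\<^bsub>G\<^esub> h)) = Add (Add (Cmp (\<rho>1 g) (S h)) (Cmp (S g) (\<rho>0 h))) (Zero V0 V1)"
    if "g \<in> carrier G" "h \<in> carrier G" for g h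
    using coboundary[OF that] add_zero_right add_in_hom comp_in_hom S \<rho>1 \<rho>0 that by metis
  have inverse: "Add (\<theta> g) (S g) = Zero V0 V1" "Add (S g) (\<theta> g) = Zero V0 V1"
    if "g \<in> carrier G" for g
    unfolding \<theta>_def using add_neg_right add_commute smult_in_hom S[OF that] by metis+
  have "is_trans C G M V1 V0 (\<rho>1, \<rho>0, \<lambda>a. Zero V0 V1, c) V1 V0 (\<rho>1, \<rho>0, \<lambda>a. Zero V0 V1, \<lambda>g h. Zero V0 V1)
          (c_id C V1, c_id C V0, \<theta>)"
    by (rule is_trans_with_identity_components[OF V \<rho>1 \<rho>0 c _ \<theta> \<theta>_one forward]) (use Z in auto)
  moreover have "is_trans C G M V1 V0 (\<rho>1, \<rho>0, \<lambda>a. Zero V0 V1, \<lambda>g h. Zero V0 V1) V1 V0 (\<rho>1, \<rho>0, \<lambda>a. Zero V0 V1, c)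
          (c_id C V1, c_id C V0, S)"
    by (rule is_trans_with_identity_components[OF V \<rho>1 \<rho>0 _ c S S_one backward]) (use Z in auto)
  ultimately show ?thesis
    unfolding rep_equiv_def
    using is_inv_modif_zero[OF V \<rho>1 \<rho>0 \<theta> S inverse(2)] is_inv_modif_zero[OF V \<rho>1 \<rho>0 S \<theta> inverse(1)]
    by (intro exI conjI)
qed

end

(* The 2-cocycle identity for the action s |-> rho1 g o s o (rho0 g)^-1 on Hom V0 V1,
   multiplied on the right by rho0 k as in the hexagon axiom of is_rep. *)
locale hom_cocycle = klinear_category C + G: group G
  for C :: "('o, 'm, 'k::field) kcat" and G :: "('g, 'x) monoid_scheme" +
  fixes V1 V0 :: 'o and \<rho>1 \<rho>0 :: "'g \<Rightarrow> 'm" and c :: "'g \<Rightarrow> 'g \<Rightarrow> 'm"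
  assumes order_invertible: "of_nat (order G) \<noteq> (0::'k)"
    and V1_obj: "V1 \<in> c_obj C" and V0_obj: "V0 \<in> c_obj C"
    and \<rho>1_hom: "g \<in> carrier G \<Longrightarrow> \<rho>1 g \<in> Hom V1 V1"
    and \<rho>0_hom: "g \<in> carrier G \<Longrightarrow> \<rho>0 g \<in> Hom V0 V0"
    and \<rho>0_mult: "g \<in> carrier G \<Longrightarrow> h \<in> carrier G \<Longrightarrow> \<rho>0 (g \<otimes>\<^bsub>G\<^esub> h) = Cmp (\<rho>0 g) (\<rho>0 h)"
    and \<rho>0_one: "\<rho>0 \<one>\<^bsub>G\<^esub> = c_id C V0"
    and c_hom: "g \<in> carrier G \<Longrightarrow> h \<in> carrier G \<Longrightarrow> c g h \<in> Hom V0 V1"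
    and c_one_left: "g \<in> carrier G \<Longrightarrow> c \<one>\<^bsub>G\<^esub> g = Zero V0 V1"
    and cocycle: "g \<in> carrier G \<Longrightarrow> h \<in> carrier G \<Longrightarrow> k \<in> carrier G \<Longrightarrow>
      Add (Cmp (c g h) (\<rho>0 k)) (c (g \<otimes>\<^bsub>G\<^esub> h) k) = Add (Cmp (\<rho>1 g) (c h k)) (c g (h \<otimes>\<^bsub>G\<^esub> k))"
begin

lemma \<rho>0_inv_cancel:
  assumes "f \<in> Hom V0 b" "k \<in> carrier G"
  shows "Cmp (Cmp f (\<rho>0 k)) (\<rho>0 (inv\<^bsub>G\<^esub> k)) = f"
proof -
  have "Cmp (Cmp f (\<rho>0 k)) (\<rho>0 (inv\<^bsub>G\<^esub> k)) = Cmp f (Cmp (\<rho>0 k) (\<rho>0 (inv\<^bsub>G\<^esub> k)))"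
    using comp_assoc[OF \<rho>0_hom \<rho>0_hom assms(1)] assms(2) by simp
  also have "\<dots> = f"
    using \<rho>0_mult[of k "inv\<^bsub>G\<^esub> k"] \<rho>0_one comp_id_right[OF assms(1)] assms(2) by simp
  finally show ?thesis .
qed

(* The cocycle identity multiplied on the right by (rho0 k)^-1: summed over k, it becomes
   cochain_sum_coboundary. *)
lemma cocycle_twisted:
  assumes g: "g \<in> carrier G" and h: "h \<in> carrier G" and k: "k \<in> carrier G"
  shows "Add (c g h) (Cmp (c (g \<otimes>\<^bsub>G\<^esub> h) k) (\<rho>0 (inv\<^bsub>G\<^esub> k)))
       = Add (Cmp (\<rho>1 g) (Cmp (c h k) (\<rho>0 (inv\<^bsub>G\<^esub> k))))
             (Cmp (Cmp (c g (h \<otimes>\<^bsub>G\<^esub> k)) (\<rho>0 (inv\<^bsub>G\<^esub> (h \<otimes>\<^bsub>G\<^esub> k)))) (\<rho>0 h))"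
proof -
  have gh: "g \<otimes>\<^bsub>G\<^esub> h \<in> carrier G" and hk: "h \<otimes>\<^bsub>G\<^esub> k \<in> carrier G" and k': "inv\<^bsub>G\<^esub> k \<in> carrier G"
    using g h k by auto
  have "Add (c g h) (Cmp (c (g \<otimes>\<^bsub>G\<^esub> h) k) (\<rho>0 (inv\<^bsub>G\<^esub> k)))
      = Cmp (Add (Cmp (c g h) (\<rho>0 k)) (c (g \<otimes>\<^bsub>G\<^esub> h) k)) (\<rho>0 (inv\<^bsub>G\<^esub> k))"
    using comp_add_left[OF \<rho>0_hom[OF k'] comp_in_hom[OF \<rho>0_hom[OF k] c_hom[OF g h]] c_hom[OF gh k]]
      \<rho>0_inv_cancel[OF c_hom[OF g h] k] by simp
  also have "\<dots> = Cmp (Add (Cmp (\<rho>1 g) (c h k)) (c g (h \<otimes>\<^bsub>G\<^esub> k))) (\<rho>0 (inv\<^bsub>G\<^esub> k))"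
    using cocycle[OF g h k] by simp
  also have "\<dots> = Add (Cmp (Cmp (\<rho>1 g) (c h k)) (\<rho>0 (inv\<^bsub>G\<^esub> k))) (Cmp (c g (h \<otimes>\<^bsub>G\<^esub> k)) (\<rho>0 (inv\<^bsub>G\<^esub> k)))"
    using comp_add_left[OF \<rho>0_hom[OF k'] comp_in_hom[OF c_hom[OF h k] \<rho>1_hom[OF g]] c_hom[OF g hk]] .
  also have "Cmp (Cmp (\<rho>1 g) (c h k)) (\<rho>0 (inv\<^bsub>G\<^esub> k)) = Cmp (\<rho>1 g) (Cmp (c h k) (\<rho>0 (inv\<^bsub>G\<^esub> k)))"
    using comp_assoc[OF \<rho>0_hom[OF k'] c_hom[OF h k] \<rho>1_hom[OF g]] by simp
  also have "Cmp (c g (h \<otimes>\<^bsub>G\<^esub> k)) (\<rho>0 (inv\<^bsub>G\<^esub> k))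
           = Cmp (Cmp (c g (h \<otimes>\<^bsub>G\<^esub> k)) (\<rho>0 (inv\<^bsub>G\<^esub> (h \<otimes>\<^bsub>G\<^esub> k)))) (\<rho>0 h)"
  proof -
    have "\<rho>0 (inv\<^bsub>G\<^esub> k) = Cmp (\<rho>0 (inv\<^bsub>G\<^esub> (h \<otimes>\<^bsub>G\<^esub> k))) (\<rho>0 h)"
      using \<rho>0_mult[of "inv\<^bsub>G\<^esub> (h \<otimes>\<^bsub>G\<^esub> k)" h] h k by (simp add: G.inv_mult_group G.m_assoc)
    then show ?thesis
      using comp_assoc[OF \<rho>0_hom[OF h] \<rho>0_hom c_hom[OF g hk]] hk by simp
  qed
  finally show ?thesis .
qed

definition cochain_sum :: "'g \<Rightarrow> 'm" where
  "cochain_sum g = finprod (hom_group V0 V1) (\<lambda>k. Cmp (c g k) (\<rho>0 (inv\<^bsub>G\<^esub> k))) (carrier G)"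

lemma twisted_in_hom: "g \<in> carrier G \<Longrightarrow> (\<lambda>k. Cmp (c g k) (\<rho>0 (inv\<^bsub>G\<^esub> k))) \<in> carrier G \<rightarrow> Hom V0 V1"
  by (auto intro: comp_in_hom \<rho>0_hom c_hom)

lemma cochain_sum_in_hom:
  assumes "g \<in> carrier G" shows "cochain_sum g \<in> Hom V0 V1"
proof -
  interpret H: comm_group "hom_group V0 V1" using comm_group_hom_group V0_obj V1_obj by blast
  show ?thesis
    using H.finprod_closed[OF twisted_in_hom[OF assms, folded hom_group_simps(1)]]
    unfolding cochain_sum_def by simp
qed

lemma cochain_sum_one: "cochain_sum \<one>\<^bsub>G\<^esub> = Zero V0 V1"
proof -
  interpret H: comm_group "hom_group V0 V1" using comm_group_hom_group V0_obj V1_obj by blast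
  have "cochain_sum \<one>\<^bsub>G\<^esub> = finprod (hom_group V0 V1) (\<lambda>k. Zero V0 V1) (carrier G)"
    unfolding cochain_sum_def
    by (rule H.finprod_cong') (simp_all add: c_one_left comp_zero_left \<rho>0_hom V1_obj zero_in_hom V0_obj)
  then show ?thesis using H.finprod_one by simp
qed

lemma cochain_sum_coboundary:
  assumes g: "g \<in> carrier G" and h: "h \<in> carrier G"
  shows "Add (Smult (of_nat (order G)) (c g h)) (cochain_sum (g \<otimes>\<^bsub>G\<^esub> h))
       = Add (Cmp (\<rho>1 g) (cochain_sum h)) (Cmp (cochain_sum g) (\<rho>0 h))"
proof -
  interpret H: comm_group "hom_group V0 V1" using comm_group_hom_group V0_obj V1_obj by blast
  let ?tw = "\<lambda>g k. Cmp (c g k) (\<rho>0 (inv\<^bsub>G\<^esub> k))"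
  have gh: "g \<otimes>\<^bsub>G\<^esub> h \<in> carrier G" using g h by simp
  have translated: "(\<lambda>k. ?tw g (h \<otimes>\<^bsub>G\<^esub> k)) \<in> carrier G \<rightarrow> Hom V0 V1"
    using twisted_in_hom[OF g] h by auto
  have left: "(\<lambda>k. Cmp (\<rho>1 g) (?tw h k)) \<in> carrier G \<rightarrow> Hom V0 V1"
    using twisted_in_hom[OF h] comp_in_hom \<rho>1_hom[OF g] by blast
  have right: "(\<lambda>k. Cmp (?tw g (h \<otimes>\<^bsub>G\<^esub> k)) (\<rho>0 h)) \<in> carrier G \<rightarrow> Hom V0 V1"
    using translated comp_in_hom \<rho>0_hom[OF h] by blast
  have "Smult (of_nat (order G)) (c g h) = finprod (hom_group V0 V1) (\<lambda>k. c g h) (carrier G)"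
    using H.finprod_const[of "c g h" "carrier G"] hom_group_nat_pow c_hom[OF g h]
    unfolding order_def by simp
  then have "Add (Smult (of_nat (order G)) (c g h)) (cochain_sum (g \<otimes>\<^bsub>G\<^esub> h))
      = finprod (hom_group V0 V1) (\<lambda>k. Add (c g h) (?tw (g \<otimes>\<^bsub>G\<^esub> h) k)) (carrier G)"
    unfolding cochain_sum_def
    using H.finprod_multf[of "\<lambda>k. c g h" "carrier G" "?tw (g \<otimes>\<^bsub>G\<^esub> h)"] twisted_in_hom[OF gh]
      c_hom[OF g h] by (simp add: Pi_iff)
  also have "\<dots> = finprod (hom_group V0 V1)
      (\<lambda>k. Add (Cmp (\<rho>1 g) (?tw h k)) (Cmp (?tw g (h \<otimes>\<^bsub>G\<^esub> k)) (\<rho>0 h))) (carrier G)"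
    using cocycle_twisted[OF g h] left right by (intro H.finprod_cong') (auto intro!: add_in_hom)
  also have "\<dots> = Add (Cmp (\<rho>1 g) (cochain_sum h))
                     (Cmp (finprod (hom_group V0 V1) (\<lambda>k. ?tw g (h \<otimes>\<^bsub>G\<^esub> k)) (carrier G)) (\<rho>0 h))"
    unfolding cochain_sum_def
    using H.finprod_multf[OF left[folded hom_group_simps(1)] right[folded hom_group_simps(1)]]
      comp_finprod_left[OF V0_obj \<rho>1_hom[OF g] twisted_in_hom[OF h]]
      comp_finprod_right[OF V1_obj \<rho>0_hom[OF h] translated]
    by simp
  also have "finprod (hom_group V0 V1) (\<lambda>k. ?tw g (h \<otimes>\<^bsub>G\<^esub> k)) (carrier G) = cochain_sum g"
    unfolding cochain_sum_def
    using finprod_translate_left[OF G.group_axioms H.comm_monoid_axioms h] twisted_in_hom[OF g] by simp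
  finally show ?thesis .
qed

definition averaged_cochain :: "'g \<Rightarrow> 'm" where
  "averaged_cochain g = Smult (1 / of_nat (order G)) (cochain_sum g)"

lemma averaged_cochain_in_hom: "g \<in> carrier G \<Longrightarrow> averaged_cochain g \<in> Hom V0 V1"
  unfolding averaged_cochain_def using cochain_sum_in_hom smult_in_hom by blast

lemma averaged_cochain_one: "averaged_cochain \<one>\<^bsub>G\<^esub> = Zero V0 V1"
  unfolding averaged_cochain_def cochain_sum_one using smult_zero V0_obj V1_obj by blast

lemma averaged_cochain_coboundary:
  assumes g: "g \<in> carrier G" and h: "h \<in> carrier G"
  shows "Add (c g h) (averaged_cochain (g \<otimes>\<^bsub>G\<^esub> h))
       = Add (Cmp (\<rho>1 g) (averaged_cochain h)) (Cmp (averaged_cochain g) (\<rho>0 h))"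
proof -
  let ?r = "1 / of_nat (order G) :: 'k"
  have gh: "g \<otimes>\<^bsub>G\<^esub> h \<in> carrier G" using g h by simp
  have "Add (c g h) (averaged_cochain (g \<otimes>\<^bsub>G\<^esub> h))
      = Smult ?r (Add (Smult (of_nat (order G)) (c g h)) (cochain_sum (g \<otimes>\<^bsub>G\<^esub> h)))"
    unfolding averaged_cochain_def
    using smult_add[OF smult_in_hom[OF c_hom[OF g h]] cochain_sum_in_hom[OF gh]]
      smult_smult[OF c_hom[OF g h]] smult_one[OF c_hom[OF g h]] order_invertible by simp
  also have "\<dots> = Smult ?r (Add (Cmp (\<rho>1 g) (cochain_sum h)) (Cmp (cochain_sum g) (\<rho>0 h)))"
    using cochain_sum_coboundary[OF g h] by simp
  also have "\<dots> = Add (Cmp (\<rho>1 g) (averaged_cochain h)) (Cmp (averaged_cochain g) (\<rho>0 h))"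
    unfolding averaged_cochain_def
    using smult_add[OF comp_in_hom[OF cochain_sum_in_hom[OF h] \<rho>1_hom[OF g]]
        comp_in_hom[OF \<rho>0_hom[OF h] cochain_sum_in_hom[OF g]]]
      comp_smult_right[OF cochain_sum_in_hom[OF h] \<rho>1_hom[OF g]]
      comp_smult_left[OF \<rho>0_hom[OF h] cochain_sum_in_hom[OF g]] by simp
  finally show ?thesis .
qed

end

context klinear_category
begin

lemma is_rep_2cell_map_hom:
  assumes "is_rep C G M act z V1 V0 (\<rho>1, \<rho>0, \<beta>, c)"
  shows "\<beta> \<in> hom M (hom_group V0 V1)"
proof (rule homI)
  note rep = assms[unfolded is_rep_def prod.case]
  show "\<beta> x \<in> carrier (hom_group V0 V1)" if "x \<in> carrier M" for x
    using rep that by simp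
  show "\<beta> (x \<otimes>\<^bsub>M\<^esub> y) = \<beta> x \<otimes>\<^bsub>hom_group V0 V1\<^esub> \<beta> y" if "x \<in> carrier M" "y \<in> carrier M" for x y
    using rep that by simp
qed

lemma hom_cocycle_if_is_rep:
  assumes G: "group G" and "of_nat (order G) \<noteq> (0::'k)"
    and rep: "is_rep C G M act z V1 V0 (\<rho>1, \<rho>0, \<beta>, c)"
    and associator_trivial: "\<And>g h k. g \<in> carrier G \<Longrightarrow> h \<in> carrier G \<Longrightarrow> k \<in> carrier G \<Longrightarrow>
      \<beta> (z g h k) = Zero V0 V1"
  shows "hom_cocycle C G V1 V0 \<rho>1 \<rho>0 c"
proof (intro hom_cocycle.intro hom_cocycle_axioms.intro)
  note rep_axioms = rep[unfolded is_rep_def prod.case]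
  show "klinear_category C" by (fact klinear_category_axioms)
  show "group G" "of_nat (order G) \<noteq> (0::'k)" by fact+
  show "Add (Cmp (c g h) (\<rho>0 k)) (c (g \<otimes>\<^bsub>G\<^esub> h) k) = Add (Cmp (\<rho>1 g) (c h k)) (c g (h \<otimes>\<^bsub>G\<^esub> k))"
    if "g \<in> carrier G" "h \<in> carrier G" "k \<in> carrier G" for g h k
  proof -
    have "g \<otimes>\<^bsub>G\<^esub> h \<in> carrier G" using G that by (simp add: group.is_monoid monoid.m_closed)
    then have "\<rho>0 k \<in> Hom V0 V0" "c g h \<in> Hom V0 V1" "c (g \<otimes>\<^bsub>G\<^esub> h) k \<in> Hom V0 V1"
      using rep_axioms that by blast+
    then have "Add (Cmp (c g h) (\<rho>0 k)) (c (g \<otimes>\<^bsub>G\<^esub> h) k) \<in> Hom V0 V1"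
      using add_in_hom comp_in_hom by blast
    then show ?thesis
      using rep_axioms that associator_trivial[OF that] add_zero_right by metis
  qed
qed (use rep[unfolded is_rep_def prod.case] in blast)+

end

theorem mainTheorem5:
  fixes C :: "('o, 'm, 'k::field_char_0) kcat"
    and G :: "'g monoid" and M :: "'a monoid"
    and act :: "'g \<Rightarrow> 'a \<Rightarrow> 'a" and z :: "'g \<Rightarrow> 'g \<Rightarrow> 'g \<Rightarrow> 'a"
    and V1 V0 :: 'o
    and \<rho>1 \<rho>0 :: "'g \<Rightarrow> 'm" and \<beta> :: "'a \<Rightarrow> 'm" and c :: "'g \<Rightarrow> 'g \<Rightarrow> 'm"
  assumes "abelian_kcat C" and "split_cat C"
    and "skeletal_2group G M act z"
    and "finite (carrier G)" and "finite (carrier M)"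
    and "V1 \<in> c_obj C" and "V0 \<in> c_obj C"
    and "is_rep C G M act z V1 V0 (\<rho>1, \<rho>0, \<beta>, c)"
  shows "(\<forall>a\<in>carrier M. \<beta> a = c_zero C V0 V1) \<and>
         rep_equiv C G M V1 V0 (\<rho>1, \<rho>0, \<lambda>a. c_zero C V0 V1, c)
                             V1 V0 (\<rho>1, \<rho>0, \<lambda>a. c_zero C V0 V1, \<lambda>g h. c_zero C V0 V1)"
proof -
  interpret klinear_category C
    using assms(1) by (simp add: abelian_kcat_def klinear_category_def)
  have G: "group G" and M: "group M"
    and z: "\<And>g h k. g \<in> carrier G \<Longrightarrow> h \<in> carrier G \<Longrightarrow> k \<in> carrier G \<Longrightarrow> z g h k \<in> carrier M"
    using assms(3) unfolding skeletal_2group_def comm_group_def by blast+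
  have order_G: "of_nat (order G) \<noteq> (0::'k)" and order_M: "of_nat (order M) \<noteq> (0::'k)"
    using assms(4,5) G M by (simp_all add: group.is_monoid monoid.order_gt_0_iff_finite)
  have \<beta>_zero: "\<forall>a\<in>carrier M. \<beta> a = Zero V0 V1"
    using hom_to_hom_group_eq_zero[OF M order_M assms(7,6) is_rep_2cell_map_hom[OF assms(8)]] by blast
  interpret hom_cocycle C G V1 V0 \<rho>1 \<rho>0 c
    using hom_cocycle_if_is_rep[OF G order_G assms(8)] z \<beta>_zero by blast
  show ?thesis
    using \<beta>_zero rep_equiv_if_compositor_coboundary[OF G V1_obj V0_obj \<rho>1_hom \<rho>0_hom c_hom
        averaged_cochain_in_hom averaged_cochain_one averaged_cochain_coboundary]
    by blast
qed

end
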